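(* Let $n\ge2$, $b_1,\dots,b_n\in\mathbb{R}^d$ with $\|b_i\|\le R'$ ($R'>0$), $B=\frac1n[b_1,\dots,b_n]^T$, each $g_i^*:\mathbb{R}\to\mathbb{R}\cup\{+\infty\}$ proper, lower semicontinuous, convex, $g^*(y)=\frac1n\sum_ig_i^*(y_i)$, and $\ell:\mathbb{R}^d\to\mathbb{R}\cup\{+\infty\}$ proper, lower semicontinuous, $\sigma$-strongly convex ($\sigma\ge0$). For the VRPDA$^2$ algorithm in the context, for all $k\ge2$ and all $(u,v)\in\mathcal{X}\times\mathcal{Y}$, with expectation taken over all randomness of the algorithm, $$\begin{aligned}\mathbb{E}[\psi_k(y_k)]\ge\mathbb{E}\Big[&\psi_{k-1}(y_{k-1})+\frac n2\|y_k-y_{k-1}\|^2+a_kg^*_{j_k}(y_{k,j_k})\\&+a_k\langle B(x_k-x_{k-1}),y_k-v\rangle-a_{k-1}\langle B(x_{k-1}-x_{k-2}),y_{k-1}-v\rangle\\&-na_{k-1}\langle B(x_{k-1}-x_{k-2}),y_k-y_{k-1}\rangle+a_k\langle-Bx_k,y_k-v\rangle\\&-(n-1)a_k\big(\langle B(x_{k-1}-u),y_k-y_{k-1}\rangle+\langle Bu,y_k-y_{k-1}\rangle\big)\Big],\end{aligned}$$ $$\mathbb{E}[\phi_k(x_k)]\ge\mathbb{E}\Big[\phi_{k-1}(x_{k-1})+\frac{n+\sigma A_{k-1}}{2}\|x_k-x_{k-1}\|^2+a_k\big(\langle x_k-u,B^Ty_k\rangle+(n-1)\langle x_k-u,B^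T(y_k-y_{k-1})\rangle+\ell(x_k)\big)\Big].$$
   Context: Norms are Euclidean; $\sigma$-strong convexity of $f$ means $f((1-\alpha)x+\alpha\hat x)\le(1-\alpha)f(x)+\alpha f(\hat x)-\frac\sigma2\alpha(1-\alpha)\|\hat x-x\|^2$. $\mathcal{X}=\mathrm{dom}(\ell)$, $\mathcal{Y}=\mathrm{dom}(g^* )$; $y_{k,j}$ is the $j$-th coordinate of $y_k$. VRPDA$^2$ algorithm: given $(x_0,y_0),(u,v)\in\mathcal{X}\times\mathcal{Y}$: $\phi_0(x)=\frac12\|x-x_0\|^2$, $\psi_0(y)=\frac12\|y-y_0\|^2$, $a_0=A_0=0$, $\tilde a_1=\frac1{2R'}$; $\tilde\psi_1(y)=\psi_0(y)+\tilde a_1(\langle-Bx_0,y-v\rangle+g^*(y))$, $y_1=\arg\min\tilde\psi_1$; $z_1=B^Ty_1$; $\tilde\phi_1(x)=\phi_0(x)+\tilde a_1(\langle x-u,z_1\rangle+\ell(x))$, $x_1=\arg\min\tilde\phi_1$; $\psi_1=n\tilde\psi_1$, $\phi_1=n\tilde\phi_1$, $a_1=A_1=n\tilde a_1$, $a_2=\frac{a_1}{n-1}$, $A_2=A_1+a_2$. For $k=2,3,\dots$: $\bar x_{k-1}=x_{k-1}+\frac{a_{k-1}}{a_k}(x_{k-1}-x_{k-2})$; pick $j_k$ uniformly at random from $\{1,\dots,n\}$, independently of the past; $\psi_k(y)=\psi_{k-1}(y)+a_k(-b_{j_k}^T\bar x_{k-1}(y_{j_k}-v_{j_k})+g^*_{j_k}(y_{j_k}))$,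 $y_k=\arg\min_y\psi_k(y)$; $\phi_k(x)=\phi_{k-1}(x)+a_k(\langle x-u,z_{k-1}+(y_{k,j_k}-y_{k-1,j_k})b_{j_k}\rangle+\ell(x))$, $x_k=\arg\min_x\phi_k(x)$; $z_k=z_{k-1}+\frac1n(y_{k,j_k}-y_{k-1,j_k})b_{j_k}$; $a_{k+1}=\min\{(1+\frac1{n-1})a_k,\frac{\sqrt{n(n+\sigma A_k)}}{2R'}\}$, $A_{k+1}=A_k+a_{k+1}$. *)

theory Defs
  imports "HOL-Analysis.Analysis" "HOL-Library.Extended_Real"
begin

definition proper_fun :: "('a \<Rightarrow> ereal) \<Rightarrow> bool" where
  "proper_fun f \<longleftrightarrow> (\<forall>x. f x \<noteq> -\<infinity>) \<and> (\<exists>x. f x \<noteq> \<infinity>)"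

definition lsc_fun :: "('a::topological_space \<Rightarrow> ereal) \<Rightarrow> bool" where
  "lsc_fun f \<longleftrightarrow> (\<forall>x. f x \<le> Liminf (at x) f)"

definition convex_fun :: "('a::real_vector \<Rightarrow> ereal) \<Rightarrow> bool" where
  "convex_fun f \<longleftrightarrow> (\<forall>x y \<alpha>. 0 < \<alpha> \<and> \<alpha> < 1 \<longrightarrow>
      f ((1 - \<alpha>) *\<^sub>R x + \<alpha> *\<^sub>R y) \<le> ereal (1 - \<alpha>) * f x + ereal \<alpha> * f y)"

definition strongly_convex_fun :: "real \<Rightarrow> ('a::real_normed_vector \<Rightarrow> ereal) \<Rightarrow> bool" where
  "strongly_convex_fun \<sigma> f \<longleftrightarrow> (\<forall>x y \<alpha>. 0 < \<alpha> \<and> \<alpha> < 1 \<longrightarrow>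
      f ((1 - \<alpha>) *\<^sub>R x + \<alpha> *\<^sub>R y) \<le> ereal (1 - \<alpha>) * f x + ereal \<alpha> * f y
        - ereal (\<sigma> / 2 * \<alpha> * (1 - \<alpha>) * (norm (y - x))\<^sup>2))"

definition argmin_of :: "('a \<Rightarrow> ereal) \<Rightarrow> 'a" where
  "argmin_of F = (SOME x. \<forall>z. F x \<le> F z)"

text \<open>The index set {1..n} is the finite type 'n, so n = CARD('n); R^d is real^'d.
  B = (1/n)[b_1,...,b_n]^T, i.e. (B x)_i = <b_i, x>/n, and B^T y = (1/n) sum_i y_i b_i.\<close>

definition Bop :: "('n::finite \<Rightarrow> real^'d) \<Rightarrow> real^'d \<Rightarrow> real^'n" where
  "Bop b x = (\<chi> i. inner (b i) x / real CARD('n))"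

definition BTop :: "('n::finite \<Rightarrow> real^'d) \<Rightarrow> real^'n \<Rightarrow> real^'d" where
  "BTop b y = (\<Sum>i\<in>UNIV. (y $ i / real CARD('n)) *\<^sub>R b i)"

definition gstar :: "('n::finite \<Rightarrow> real \<Rightarrow> ereal) \<Rightarrow> real^'n \<Rightarrow> ereal" where
  "gstar gs y = (\<Sum>i\<in>UNIV. gs i (y $ i)) / ereal (real CARD('n))"

text \<open>stepsz n sigma R k = (a_k, A_k). a_0 = A_0 = 0, a_1 = A_1 = n/(2R'), a_2 = a_1/(n-1),
  and a_{k+1} = min((1+1/(n-1)) a_k, sqrt(n(n+sigma A_k))/(2R')) for k >= 2.\<close>
fun stepsz :: "real \<Rightarrow> real \<Rightarrow> real \<Rightarrow> nat \<Rightarrow> real \<times> real" where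
  "stepsz n \<sigma> R 0 = (0, 0)"
| "stepsz n \<sigma> R (Suc 0) = (n / (2 * R), n / (2 * R))"
| "stepsz n \<sigma> R (Suc (Suc 0)) =
     (let a1 = n / (2 * R) in (a1 / (n - 1), a1 + a1 / (n - 1)))"
| "stepsz n \<sigma> R (Suc (Suc (Suc k))) =
     (let (ak, Ak) = stepsz n \<sigma> R (Suc (Suc k));
          a' = min ((1 + 1 / (n - 1)) * ak) (sqrt (n * (n + \<sigma> * Ak)) / (2 * R))
      in (a', Ak + a'))"

record ('d, 'n) vstate =
  xs :: "real^'d"
  ys :: "real^'n"
  zs :: "real^'d"
  phis :: "real^'d \<Rightarrow> ereal"
  psis :: "real^'n \<Rightarrow> ereal"

text \<open>vrpda b gs l sigma R x0 y0 u v j k is the state after iteration k, where j k is the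
  coordinate j_k sampled at iteration k (only j 2, j 3, ... are used).\<close>
fun vrpda :: "('n::finite \<Rightarrow> real^'d) \<Rightarrow> ('n \<Rightarrow> real \<Rightarrow> ereal) \<Rightarrow> (real^'d \<Rightarrow> ereal)
   \<Rightarrow> real \<Rightarrow> real \<Rightarrow> real^'d \<Rightarrow> real^'n \<Rightarrow> real^'d \<Rightarrow> real^'n \<Rightarrow> (nat \<Rightarrow> 'n) \<Rightarrow> nat
   \<Rightarrow> ('d, 'n) vstate" where
  "vrpda b gs l \<sigma> R x0 y0 u v j 0 =
     \<lparr> xs = x0, ys = y0, zs = 0,
       phis = (\<lambda>x. ereal ((norm (x - x0))\<^sup>2 / 2)),
       psis = (\<lambda>y. ereal ((norm (y - y0))\<^sup>2 / 2)) \<rparr>"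
| "vrpda b gs l \<sigma> R x0 y0 u v j (Suc 0) =
     (let n = real CARD('n); ta = 1 / (2 * R);
          tpsi = (\<lambda>y. ereal ((norm (y - y0))\<^sup>2 / 2)
                   + ereal ta * (ereal (inner (- Bop b x0) (y - v)) + gstar gs y));
          y1 = argmin_of tpsi;
          z1 = BTop b y1;
          tphi = (\<lambda>x. ereal ((norm (x - x0))\<^sup>2 / 2)
                   + ereal ta * (ereal (inner (x - u) z1) + l x));
          x1 = argmin_of tphi
      in \<lparr> xs = x1, ys = y1, zs = z1,
           phis = (\<lambda>x. ereal n * tphi x), psis = (\<lambda>y. ereal n * tpsi y) \<rparr>)"
| "vrpda b gs l \<sigma> R x0 y0 u v j (Suc (Suc k)) =
     (let n = real CARD('n);
          S1 = vrpda b gs l \<sigma> R x0 y0 u v j (Suc k);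
          S2 = vrpda b gs l \<sigma> R x0 y0 u v j k;
          a = fst (stepsz n \<sigma> R (Suc (Suc k)));
          a' = fst (stepsz n \<sigma> R (Suc k));
          xbar = xs S1 + (a' / a) *\<^sub>R (xs S1 - xs S2);
          jk = j (Suc (Suc k));
          psi = (\<lambda>y. psis S1 y + ereal a * (ereal (- inner (b jk) xbar * (y $ jk - v $ jk))
                                             + gs jk (y $ jk)));
          yk = argmin_of psi;
          dk = yk $ jk - ys S1 $ jk;
          phi = (\<lambda>x. phis S1 x + ereal a * (ereal (inner (x - u) (zs S1 + dk *\<^sub>R b jk)) + l x));
          xk = argmin_of phi;
          zk = zs S1 + (dk / n) *\<^sub>R b jk
      in \<lparr> xs = xk, ys = yk, zs = zk, phis = phi, psis = psi \<rparr>)"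

text \<open>The quantities at iteration k depend only on j_2,...,j_k, which are i.i.d. uniform on
  the index set; the expectation is the uniform average over all these choices.\<close>
definition expect_upto :: "nat \<Rightarrow> ((nat \<Rightarrow> 'n::finite) \<Rightarrow> ereal) \<Rightarrow> ereal" where
  "expect_upto k F = (\<Sum>js\<in>PiE {2..k} (\<lambda>_. UNIV). F js)
                     / ereal (real (card (PiE {2..k} (\<lambda>_. (UNIV :: 'n set)))))"

end

theory Submission
  imports Defs
begin

text \<open>The estimate functions keep a simple closed form along the iteration: \<open>\<psi>\<^sub>k\<close> is
  \<open>n/2 \<parallel>y - y\<^sub>0\<parallel>\<^sup>2\<close> plus affine terms plus positive multiples of the \<open>g\<^sub>i\<^sup>*\<close>, a coordinatewise
  separable and \<open>n\<close>-strongly convex function, and \<open>\<phi>\<^sub>k\<close> is \<open>n/2 \<parallel>x - x\<^sub>0\<parallel>\<^sup>2\<close> plus an affine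
  term plus \<open>A\<^sub>k \<ell>\<close>, which is \<open>(n + \<sigma> A\<^sub>k)\<close>-strongly convex. Lower semicontinuity and strong
  convexity give minimizers \<open>y\<^sub>k\<close>, \<open>x\<^sub>k\<close>, away from which the estimates grow quadratically.
  Writing \<open>\<psi>\<^sub>k = \<psi>\<^sub>k\<^sub>-\<^sub>1 + (\<dots>)\<close>, \<open>\<phi>\<^sub>k = \<phi>\<^sub>k\<^sub>-\<^sub>1 + (\<dots>)\<close> at the new minimizers and using this
  growth gives both inequalities for every outcome of the sampling, the dual one up to a
  sampling error. Separability makes \<open>y\<^sub>k\<close> differ from \<open>y\<^sub>k\<^sub>-\<^sub>1\<close> only in coordinate \<open>j\<^sub>k\<close>, which
  turns the coupling term into the stated combination of inner products; the sampling
  error has mean zero over the uniform choice of \<open>j\<^sub>k\<close>.\<close>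


section \<open>Minimizers of strongly convex extended-real functions\<close>

definition quadratic_growth_minimizer :: "real \<Rightarrow> ('a::real_normed_vector \<Rightarrow> ereal) \<Rightarrow> 'a \<Rightarrow> bool" where
  "quadratic_growth_minimizer m F z \<longleftrightarrow>
     F z \<noteq> \<infinity> \<and> F z \<noteq> -\<infinity> \<and> (\<forall>w. F z + ereal (m / 2 * (norm (w - z))\<^sup>2) \<le> F w)"

lemma quadratic_growth_minimizer_le:
  assumes "quadratic_growth_minimizer m F z" and "m \<ge> 0"
  shows "F z \<le> F w"
proof -
  have "F z \<le> F z + ereal (m / 2 * (norm (w - z))\<^sup>2)"
    using assms(2) by (simp add: add_increasing2)
  also have "\<dots> \<le> F w"
    using assms(1) unfolding quadratic_growth_minimizer_def by blast
  finally show ?thesis .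
qed

lemma argmin_of_minimal:
  assumes "\<And>w. F z \<le> F w"
  shows "F (argmin_of F) \<le> F w"
  unfolding argmin_of_def by (rule someI2[of _ z]) (use assms in auto)

lemma argmin_of_quadratic_growth_minimizer:
  assumes qg: "quadratic_growth_minimizer m F z" and m: "m > 0"
  shows "argmin_of F = z"
proof -
  let ?w = "argmin_of F"
  obtain Z where Z: "F z = ereal Z"
    using qg unfolding quadratic_growth_minimizer_def by (cases "F z") auto
  have "F z + ereal (m / 2 * (norm (?w - z))\<^sup>2) \<le> F ?w"
    using qg unfolding quadratic_growth_minimizer_def by blast
  also have "F ?w \<le> F z"
    using quadratic_growth_minimizer_le[OF qg] m by (intro argmin_of_minimal) simp
  finally have "m / 2 * (norm (?w - z))\<^sup>2 \<le> 0"
    unfolding Z by simp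
  with m show ?thesis
    by (simp add: mult_le_0_iff)
qed

lemma strongly_convex_fun_quadratic_growth:
  fixes F :: "'a::real_normed_vector \<Rightarrow> ereal"
  assumes sc: "strongly_convex_fun m F" and m: "m \<ge> 0"
    and fin: "F z \<noteq> \<infinity>" "F z \<noteq> -\<infinity>" and min: "\<And>w. F z \<le> F w"
  shows "quadratic_growth_minimizer m F z"
  unfolding quadratic_growth_minimizer_def
proof (intro conjI fin allI)
  fix y
  show "F z + ereal (m / 2 * (norm (y - z))\<^sup>2) \<le> F y"
  proof (cases "F y")
    case (real Y)
    from fin obtain Z where Z: "F z = ereal Z" by (cases "F z") auto
    define c where "c = m / 2 * (norm (y - z))\<^sup>2"
    have "Z + c * (1 - \<alpha>) \<le> Y" if \<alpha>: "0 < \<alpha>" "\<alpha> < 1" for \<alpha>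
    proof -
      have "F z \<le> F ((1 - \<alpha>) *\<^sub>R z + \<alpha> *\<^sub>R y)" by (rule min)
      also have "\<dots> \<le> ereal (1 - \<alpha>) * F z + ereal \<alpha> * F y - ereal (m / 2 * \<alpha> * (1 - \<alpha>) * (norm (y - z))\<^sup>2)"
        using sc \<alpha> unfolding strongly_convex_fun_def by blast
      finally have "\<alpha> * (Z + c * (1 - \<alpha>)) \<le> \<alpha> * Y"
        using Z real by (simp add: c_def algebra_simps)
      with \<alpha> show ?thesis by simp
    qed
    then have "eventually (\<lambda>\<alpha>. Z + c * (1 - \<alpha>) \<le> Y) (at_right 0)"
      unfolding eventually_at_right_field by (intro exI[of _ 1]) auto
    moreover have "((\<lambda>\<alpha>. Z + c * (1 - \<alpha>)) \<longlongrightarrow> Z + c * (1 - 0)) (at_right 0)"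
      by (intro tendsto_intros)
    ultimately have "Z + c \<le> Y"
      using tendsto_upperbound by fastforce
    then show ?thesis using Z real by (simp add: c_def)
  qed (use min[of y] fin in auto)
qed

lemma lsc_fun_eventually_greater:
  fixes F :: "'a::metric_space \<Rightarrow> ereal"
  assumes lsc: "lsc_fun F" and c: "c < F z"
  obtains d where "d > 0" and "\<And>y. dist y z < d \<Longrightarrow> c < F y"
proof -
  have "eventually (\<lambda>y. c < F y) (at z)"
    using lsc c unfolding lsc_fun_def le_Liminf_iff by blast
  then obtain d where "d > 0" and near: "\<And>y. y \<noteq> z \<Longrightarrow> dist y z < d \<Longrightarrow> c < F y"
    unfolding eventually_at by blast
  show ?thesis
  proof (rule that[OF \<open>d > 0\<close>])
    show "c < F y" if "dist y z < d" for y
      using c near[OF _ that] by (cases "y = z") auto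
  qed
qed

lemma lsc_fun_le_limit:
  fixes F :: "'a::metric_space \<Rightarrow> ereal"
  assumes lsc: "lsc_fun F" and X: "X \<longlonglongrightarrow> z"
    and bound: "\<And>k. F (X k) \<le> ereal (c k)" and c: "c \<longlonglongrightarrow> L"
  shows "F z \<le> ereal L"
proof (rule ccontr)
  assume "\<not> F z \<le> ereal L"
  then obtain c' where c': "ereal L < c'" "c' < F z"
    using ereal_dense2 by (metis not_le)
  then obtain r where r: "c' = ereal r"
    by (cases c') auto
  obtain d where "d > 0" and near: "\<And>y. dist y z < d \<Longrightarrow> c' < F y"
    using lsc_fun_eventually_greater[OF lsc c'(2)] by blast
  have "eventually (\<lambda>k. dist (X k) z < d) sequentially"
    using X \<open>d > 0\<close> by (rule tendstoD)
  moreover have "eventually (\<lambda>k. c k < r) sequentially"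
    using c c'(1) r by (intro order_tendstoD) auto
  ultimately have "eventually (\<lambda>k. False) sequentially"
  proof eventually_elim
    case (elim k)
    then show ?case using less_le_trans[OF near bound[of k]] r by simp
  qed
  then show False by simp
qed

text \<open>Lower semicontinuity bounds F below near p; along the segment from p to a far point x,
  convexity turns this into a bound that decreases only linearly in the distance, which the
  quadratic term from strong convexity dominates.\<close>
lemma strongly_convex_fun_bounded_below:
  fixes F :: "'a::real_normed_vector \<Rightarrow> ereal"
  assumes lsc: "lsc_fun F" and sc: "strongly_convex_fun m F" and m: "m > 0"
    and nm: "\<And>x. F x \<noteq> -\<infinity>" and p: "F p \<noteq> \<infinity>"
  obtains L where "\<And>x. ereal L \<le> F x"
proof -
  obtain P where P: "F p = ereal P"
    using p nm[of p] by (cases "F p") auto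
  obtain d where d: "d > 0" and near: "\<And>y. dist y p < d \<Longrightarrow> ereal (P - 1) < F y"
    using lsc_fun_eventually_greater[OF lsc, of "ereal (P - 1)" p] P by auto
  have "ereal (P - 1 - 4 / (m * d\<^sup>2)) \<le> F x" for x
  proof (cases "F x")
    case (real X)
    have bound_pos: "0 \<le> 4 / (m * d\<^sup>2)"
      using m by simp
    show ?thesis
    proof (cases "norm (x - p) < d")
      case True
      then have "P - 1 < X"
        using near[of x] real by (simp add: dist_norm)
      then show ?thesis
        unfolding real ereal_less_eq(3) using bound_pos by linarith
    next
      case False
      define r where "r = norm (x - p)"
      have r: "r \<ge> d" "r > 0"
        using False d by (auto simp: r_def)
      define \<alpha> where "\<alpha> = d / (2 * r)"
      have \<alpha>: "0 < \<alpha>" "\<alpha> \<le> 1/2"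
        using d r by (auto simp: \<alpha>_def field_simps)
      have "dist ((1 - \<alpha>) *\<^sub>R p + \<alpha> *\<^sub>R x) p = \<alpha> * r"
        using \<alpha> by (simp add: dist_norm r_def algebra_simps flip: scaleR_diff_right)
      also have "\<dots> < d"
        using d r by (simp add: \<alpha>_def)
      finally have "ereal (P - 1) < F ((1 - \<alpha>) *\<^sub>R p + \<alpha> *\<^sub>R x)"
        by (rule near)
      also have "\<dots> \<le> ereal (1 - \<alpha>) * F p + ereal \<alpha> * F x - ereal (m / 2 * \<alpha> * (1 - \<alpha>) * r\<^sup>2)"
        using sc \<alpha> unfolding strongly_convex_fun_def r_def by auto
      finally have "P - 1 < (1 - \<alpha>) * P + \<alpha> * X - m / 2 * \<alpha> * (1 - \<alpha>) * r\<^sup>2"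
        using P real by simp
      then have "P - 1 / \<alpha> + m / 2 * (1 - \<alpha>) * r\<^sup>2 < X"
        using \<alpha> by (simp add: field_simps)
      moreover have "m / 4 * r\<^sup>2 \<le> m / 2 * (1 - \<alpha>) * r\<^sup>2"
        using \<alpha> m by (intro mult_right_mono) auto
      moreover have "1 / \<alpha> = 2 * r / d"
        using d r by (simp add: \<alpha>_def)
      moreover have "m / 4 * r\<^sup>2 - 2 * r / d + 4 / (m * d\<^sup>2) = m / 4 * (r - 4 / (m * d))\<^sup>2"
        using m d by (simp add: power2_eq_square field_simps)
      moreover have "0 \<le> m / 4 * (r - 4 / (m * d))\<^sup>2"
        using m by simp
      ultimately show ?thesis
        using real by simp
    qed
  qed (use nm in auto)
  then show ?thesis by (rule that)
qed

lemma strongly_convex_fun_near_minimizers_close: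
  fixes F :: "'a::real_normed_vector \<Rightarrow> ereal"
  assumes sc: "strongly_convex_fun m F" and inf: "\<And>w. ereal I \<le> F w"
    and x: "F x \<le> ereal (I + \<epsilon>)" and y: "F y \<le> ereal (I + \<delta>)"
  shows "m * (norm (x - y))\<^sup>2 \<le> 4 * (\<epsilon> + \<delta>)"
proof -
  obtain X Y where X: "F x = ereal X" and Y: "F y = ereal Y"
    using inf[of x] inf[of y] x y by (cases "F x"; cases "F y") auto
  have "ereal I \<le> F ((1 - 1/2) *\<^sub>R x + (1/2) *\<^sub>R y)"
    by (rule inf)
  also have "\<dots> \<le> ereal (1 - 1/2) * F x + ereal (1/2) * F y - ereal (m / 2 * (1/2) * (1 - 1/2) * (norm (y - x))\<^sup>2)"
    by (rule sc[unfolded strongly_convex_fun_def, rule_format]) simp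
  finally have "I \<le> X / 2 + Y / 2 - m / 8 * (norm (x - y))\<^sup>2"
    unfolding X Y by (simp add: norm_minus_commute)
  then show ?thesis
    using x y X Y by simp
qed

lemma strongly_convex_fun_minimizing_Cauchy:
  fixes F :: "'a::real_normed_vector \<Rightarrow> ereal"
  assumes sc: "strongly_convex_fun m F" and m: "m > 0" and inf: "\<And>w. ereal I \<le> F w"
    and X: "\<And>k. F (X k) \<le> ereal (I + 1 / (real k + 1))"
  shows "Cauchy X"
proof (rule metric_CauchyI)
  fix e :: real
  assume e: "0 < e"
  obtain M :: nat where M: "inverse (real (Suc M)) < m * e\<^sup>2 / 8"
    using reals_Archimedean[of "m * e\<^sup>2 / 8"] e m by auto
  have "dist (X k) (X l) < e" if kl: "M \<le> k" "M \<le> l" for k l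
  proof -
    have "1 / (real k + 1) \<le> inverse (real (Suc M))" "1 / (real l + 1) \<le> inverse (real (Suc M))"
      using kl by (simp_all add: inverse_eq_divide frac_le)
    moreover have "m * (norm (X k - X l))\<^sup>2 \<le> 4 * (1 / (real k + 1) + 1 / (real l + 1))"
      by (rule strongly_convex_fun_near_minimizers_close[OF sc inf X X])
    ultimately have "m * (norm (X k - X l))\<^sup>2 \<le> 8 * inverse (real (Suc M))"
      by argo
    also have "\<dots> < m * e\<^sup>2"
      using M by simp
    finally have "m * (norm (X k - X l))\<^sup>2 < m * e\<^sup>2" .
    then have "(norm (X k - X l))\<^sup>2 < e\<^sup>2"
      using m by simp
    then show ?thesis
      using e by (simp add: dist_norm power_less_imp_less_base)
  qed
  then show "\<exists>M. \<forall>k\<ge>M. \<forall>l\<ge>M. dist (X k) (X l) < e"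
    by blast
qed

lemma strongly_convex_fun_has_minimizer:
  fixes F :: "'a::euclidean_space \<Rightarrow> ereal"
  assumes lsc: "lsc_fun F" and sc: "strongly_convex_fun m F" and m: "m > 0"
    and nm: "\<And>x. F x \<noteq> -\<infinity>" and p: "F p \<noteq> \<infinity>"
  obtains z where "quadratic_growth_minimizer m F z"
proof -
  obtain L where L: "\<And>x. ereal L \<le> F x"
    using strongly_convex_fun_bounded_below[OF lsc sc m nm p] by blast
  have "ereal L \<le> Inf (range F)"
    using L by (auto intro: INF_greatest)
  moreover have "Inf (range F) \<le> F p"
    by (simp add: INF_lower)
  ultimately obtain I where I: "Inf (range F) = ereal I"
    using p by (cases "Inf (range F)") auto
  have inf: "ereal I \<le> F w" for w
    using INF_lower[of w UNIV F] I by simp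
  have "\<exists>x. F x < ereal (I + 1 / (real k + 1))" for k :: nat
  proof -
    have "Inf (range F) < ereal (I + 1 / (real k + 1))"
      using I by simp
    then show ?thesis
      by (simp add: Inf_less_iff)
  qed
  then obtain X where X: "\<And>k. F (X k) < ereal (I + 1 / (real k + 1))"
    by metis
  have "Cauchy X"
    using strongly_convex_fun_minimizing_Cauchy[OF sc m inf] X by (meson less_imp_le)
  then obtain z where z: "X \<longlonglongrightarrow> z"
    using Cauchy_convergent_iff convergent_def by blast
  have "F z \<le> ereal I"
  proof (rule lsc_fun_le_limit[OF lsc z])
    show "F (X k) \<le> ereal (I + 1 / (real k + 1))" for k
      using X[of k] by simp
    show "(\<lambda>k. I + 1 / (real k + 1)) \<longlonglongrightarrow> I"
      using tendsto_add[OF tendsto_const[of I] LIMSEQ_Suc[OF lim_inverse_n']]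
      by (simp add: inverse_eq_divide add.commute)
  qed
  then have "F z \<noteq> \<infinity>" and "\<And>w. F z \<le> F w"
    using inf order_trans by auto
  with sc m nm show ?thesis
    by (intro that strongly_convex_fun_quadratic_growth) auto
qed

lemma convex_fun_imp_strongly_convex_fun_0: "convex_fun g \<Longrightarrow> strongly_convex_fun 0 g"
  unfolding convex_fun_def strongly_convex_fun_def by (simp add: zero_ereal_def[symmetric])

lemma strongly_convex_fun_scale:
  fixes g :: "'a::real_normed_vector \<Rightarrow> ereal"
  assumes sc: "strongly_convex_fun \<mu> g" and nm: "\<And>x. g x \<noteq> -\<infinity>" and t: "t > 0"
  shows "strongly_convex_fun (t * \<mu>) (\<lambda>x. ereal t * g x)"
  unfolding strongly_convex_fun_def
proof (intro allI impI)
  fix x y :: 'a and \<alpha> :: real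
  assume \<alpha>: "0 < \<alpha> \<and> \<alpha> < 1"
  let ?m = "(1 - \<alpha>) *\<^sub>R x + \<alpha> *\<^sub>R y" and ?q = "\<mu> / 2 * \<alpha> * (1 - \<alpha>) * (norm (y - x))\<^sup>2"
  have "ereal t * g ?m \<le> ereal t * (ereal (1 - \<alpha>) * g x + ereal \<alpha> * g y - ereal ?q)"
    using sc \<alpha> t unfolding strongly_convex_fun_def by (intro ereal_mult_left_mono) auto
  also have "\<dots> = ereal (1 - \<alpha>) * (ereal t * g x) + ereal \<alpha> * (ereal t * g y) - ereal (t * \<mu> / 2 * \<alpha> * (1 - \<alpha>) * (norm (y - x))\<^sup>2)"
    using \<alpha> t nm[of x] nm[of y] by (cases "g x"; cases "g y") (simp_all add: algebra_simps)
  finally show "ereal t * g ?m \<le> ereal (1 - \<alpha>) * (ereal t * g x) + ereal \<alpha> * (ereal t * g y)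
      - ereal (t * \<mu> / 2 * \<alpha> * (1 - \<alpha>) * (norm (y - x))\<^sup>2)" .
qed

lemma strongly_convex_fun_add_real:
  fixes Q :: "'a::real_normed_vector \<Rightarrow> real" and H :: "'a \<Rightarrow> ereal"
  assumes Q: "strongly_convex_fun \<nu> (\<lambda>x. ereal (Q x))"
    and H: "strongly_convex_fun \<mu> H" and nm: "\<And>x. H x \<noteq> -\<infinity>"
  shows "strongly_convex_fun (\<nu> + \<mu>) (\<lambda>x. ereal (Q x) + H x)"
  unfolding strongly_convex_fun_def
proof (intro allI impI)
  fix x y :: 'a and \<alpha> :: real
  assume \<alpha>: "0 < \<alpha> \<and> \<alpha> < 1"
  let ?m = "(1 - \<alpha>) *\<^sub>R x + \<alpha> *\<^sub>R y" and ?d = "\<alpha> * (1 - \<alpha>) * (norm (y - x))\<^sup>2"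
  have "ereal (Q ?m) + H ?m
      \<le> ereal ((1 - \<alpha>) * Q x + \<alpha> * Q y - \<nu> / 2 * ?d) + (ereal (1 - \<alpha>) * H x + ereal \<alpha> * H y - ereal (\<mu> / 2 * ?d))"
    using Q H \<alpha> unfolding strongly_convex_fun_def by (intro add_mono) (auto simp: mult.assoc)
  also have "\<dots> = ereal (1 - \<alpha>) * (ereal (Q x) + H x) + ereal \<alpha> * (ereal (Q y) + H y) - ereal ((\<nu> + \<mu>) / 2 * ?d)"
    using \<alpha> nm[of x] nm[of y] by (cases "H x"; cases "H y") (simp_all add: field_simps)
  finally show "ereal (Q ?m) + H ?m \<le> ereal (1 - \<alpha>) * (ereal (Q x) + H x) + ereal \<alpha> * (ereal (Q y) + H y)
      - ereal ((\<nu> + \<mu>) / 2 * \<alpha> * (1 - \<alpha>) * (norm (y - x))\<^sup>2)"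
    by (simp add: mult.assoc)
qed

lemma norm_convex_combination_sq:
  fixes u w :: "'a::real_inner"
  shows "(norm ((1 - \<alpha>) *\<^sub>R u + \<alpha> *\<^sub>R w))\<^sup>2
     = (1 - \<alpha>) * (norm u)\<^sup>2 + \<alpha> * (norm w)\<^sup>2 - \<alpha> * (1 - \<alpha>) * (norm (w - u))\<^sup>2"
  unfolding power2_norm_eq_inner
  by (simp add: inner_add_left inner_add_right inner_diff_left inner_diff_right inner_commute algebra_simps)

lemma strongly_convex_fun_quadratic:
  fixes x0 c :: "'a::real_inner"
  shows "strongly_convex_fun n (\<lambda>x. ereal (n / 2 * (norm (x - x0))\<^sup>2 + inner c x + e))"
  unfolding strongly_convex_fun_def
proof (intro allI impI)
  fix x y :: 'a and \<alpha> :: real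
  have "(1 - \<alpha>) *\<^sub>R x + \<alpha> *\<^sub>R y - x0 = (1 - \<alpha>) *\<^sub>R (x - x0) + \<alpha> *\<^sub>R (y - x0)"
    by (simp add: algebra_simps)
  then have sq: "(norm ((1 - \<alpha>) *\<^sub>R x + \<alpha> *\<^sub>R y - x0))\<^sup>2
      = (1 - \<alpha>) * (norm (x - x0))\<^sup>2 + \<alpha> * (norm (y - x0))\<^sup>2 - \<alpha> * (1 - \<alpha>) * (norm (y - x))\<^sup>2"
    by (simp add: norm_convex_combination_sq)
  show "ereal (n / 2 * (norm ((1 - \<alpha>) *\<^sub>R x + \<alpha> *\<^sub>R y - x0))\<^sup>2 + inner c ((1 - \<alpha>) *\<^sub>R x + \<alpha> *\<^sub>R y) + e)
      \<le> ereal (1 - \<alpha>) * ereal (n / 2 * (norm (x - x0))\<^sup>2 + inner c x + e)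
        + ereal \<alpha> * ereal (n / 2 * (norm (y - x0))\<^sup>2 + inner c y + e)
        - ereal (n / 2 * \<alpha> * (1 - \<alpha>) * (norm (y - x))\<^sup>2)"
    unfolding sq by (simp add: inner_add_right inner_diff_right field_simps)
qed

lemma lsc_fun_scale:
  fixes g :: "'a::perfect_space \<Rightarrow> ereal"
  assumes "lsc_fun g" "t \<ge> 0"
  shows "lsc_fun (\<lambda>x. ereal t * g x)"
  using assms unfolding lsc_fun_def
  by (simp add: Liminf_ereal_mult_left at_neq_bot ereal_mult_left_mono)

lemma lsc_fun_add_continuous:
  fixes H :: "'a::metric_space \<Rightarrow> ereal"
  assumes lsc: "lsc_fun H" and nm: "\<And>x. H x \<noteq> -\<infinity>" and Q: "\<And>x. isCont Q x"
  shows "lsc_fun (\<lambda>x. ereal (Q x) + H x)"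
  unfolding lsc_fun_def le_Liminf_iff
proof (intro allI impI)
  fix x and y :: ereal
  assume y: "y < ereal (Q x) + H x"
  show "\<forall>\<^sub>F z in at x. y < ereal (Q z) + H z"
  proof (cases y)
    case MInf
    have "-\<infinity> < ereal (Q z) + H z" for z
      using nm[of z] by (cases "H z") auto
    then show ?thesis
      using MInf by simp
  next
    case (real c)
    have "ereal (c - Q x) < H x"
      using y real by (cases "H x") auto
    then obtain c'' where c'': "ereal (c - Q x) < c''" "c'' < H x"
      using ereal_dense2 by blast
    then obtain c' where c': "c - Q x < c'" "ereal c' < H x"
      by (cases c'') auto
    have "\<forall>\<^sub>F z in at x. ereal c' < H z"
      using lsc c'(2) unfolding lsc_fun_def le_Liminf_iff by blast
    moreover have "\<forall>\<^sub>F z in at x. dist (Q z) (Q x) < c' - (c - Q x)"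
      using Q[of x] c'(1) unfolding isCont_def by (intro tendstoD) auto
    ultimately show ?thesis
    proof eventually_elim
      case (elim z)
      then have "c < Q z + c'"
        by (simp add: dist_real_def abs_less_iff)
      then show ?case
        using elim(1) real by (cases "H z") auto
    qed
  qed (use y in simp)
qed

lemma quadratic_plus_argmin_of:
  fixes H :: "'a::euclidean_space \<Rightarrow> ereal" and x0 c :: 'a and n e :: real
  defines "F \<equiv> \<lambda>x. ereal (n / 2 * (norm (x - x0))\<^sup>2 + inner c x + e) + H x"
  assumes n: "n > 0" and \<mu>: "\<mu> \<ge> 0" and lsc: "lsc_fun H" and sc: "strongly_convex_fun \<mu> H"
    and nm: "\<And>x. H x \<noteq> -\<infinity>" and p: "H p \<noteq> \<infinity>"
  shows "quadratic_growth_minimizer (n + \<mu>) F (argmin_of F)"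
proof -
  have scF: "strongly_convex_fun (n + \<mu>) F"
    unfolding F_def by (rule strongly_convex_fun_add_real[OF strongly_convex_fun_quadratic sc nm])
  have "lsc_fun F"
    unfolding F_def by (rule lsc_fun_add_continuous[OF lsc nm]) (intro continuous_intros)
  moreover have "F x \<noteq> -\<infinity>" for x
    using nm[of x] by (simp add: F_def)
  moreover have "F p \<noteq> \<infinity>"
    using p nm[of p] by (simp add: F_def)
  ultimately obtain z where z: "quadratic_growth_minimizer (n + \<mu>) F z"
    using strongly_convex_fun_has_minimizer[OF _ scF] n \<mu> by (metis add_pos_nonneg)
  then show ?thesis
    using argmin_of_quadratic_growth_minimizer n \<mu> by (metis add_pos_nonneg)
qed

lemma norm_vec_power2: "(norm (y :: real^'n))\<^sup>2 = (\<Sum>i\<in>UNIV. (y $ i)\<^sup>2)"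
  unfolding power2_norm_eq_inner inner_vec_def by (simp add: power2_eq_square)

lemma quadratic_growth_minimizer_separable:
  fixes f :: "'n::finite \<Rightarrow> real \<Rightarrow> ereal"
  assumes "\<And>i. quadratic_growth_minimizer m (f i) (z i)"
  shows "quadratic_growth_minimizer m (\<lambda>y. \<Sum>i\<in>UNIV. f i (y $ i)) (\<chi> i. z i)"
proof -
  have fin: "f i (z i) \<noteq> \<infinity>" "f i (z i) \<noteq> -\<infinity>"
    and grow: "f i (z i) + ereal (m / 2 * (t - z i)\<^sup>2) \<le> f i t" for i t
    using assms[of i] unfolding quadratic_growth_minimizer_def by (auto dest: spec[of _ t])
  have "(\<Sum>i\<in>UNIV. f i (z i)) + ereal (m / 2 * (norm (y - (\<chi> i. z i)))\<^sup>2)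
      = (\<Sum>i\<in>UNIV. f i (z i) + ereal (m / 2 * (y $ i - z i)\<^sup>2))" for y :: "real^'n"
    by (simp add: sum.distrib norm_vec_power2 sum_distrib_left)
  also have "\<dots> y \<le> (\<Sum>i\<in>UNIV. f i (y $ i))" for y :: "real^'n"
    by (intro sum_mono grow)
  moreover have "\<bar>\<Sum>i\<in>UNIV. f i (z i)\<bar> \<noteq> \<infinity>"
    using fin by (auto simp: sum_Inf)
  ultimately show ?thesis
    unfolding quadratic_growth_minimizer_def by auto
qed

lemma argmin_of_scale:
  assumes "t > 0"
  shows "argmin_of (\<lambda>y. ereal t * f y) = argmin_of f"
  using assms unfolding argmin_of_def by (simp add: ereal_mult_le_mult_iff)

lemma inner_Bop:
  fixes b :: "'n::finite \<Rightarrow> real^'d"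
  shows "inner (Bop b w) y = (\<Sum>i\<in>UNIV. inner (b i) w * y $ i) / real CARD('n)"
  unfolding inner_vec_def[of "Bop b w"] by (simp add: Bop_def sum_divide_distrib)

lemma linear_Bop: "linear (Bop b)"
  by (rule linearI) (simp_all add: Bop_def vec_eq_iff inner_add_right add_divide_distrib)

lemma linear_BTop: "linear (BTop b)"
  by (rule linearI) (simp_all add: BTop_def scaleR_add_left add_divide_distrib sum.distrib scaleR_sum_right)

lemma inner_Bop_single_coord:
  fixes b :: "'n::finite \<Rightarrow> real^'d" and y y' :: "real^'n"
  assumes "\<And>i. i \<noteq> j \<Longrightarrow> y $ i = y' $ i"
  shows "inner (Bop b w) (y - y') = inner (b j) w * (y $ j - y' $ j) / real CARD('n)"
  unfolding inner_Bop
  by (subst sum.remove[of _ j]) (auto simp: assms intro!: sum.neutral)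

lemma BTop_single_coord:
  fixes b :: "'n::finite \<Rightarrow> real^'d" and y y' :: "real^'n"
  assumes "\<And>i. i \<noteq> j \<Longrightarrow> y $ i = y' $ i"
  shows "BTop b y = BTop b y' + ((y $ j - y' $ j) / real CARD('n)) *\<^sub>R b j"
proof -
  have "BTop b y - BTop b y' = (\<Sum>i\<in>UNIV. ((y $ i - y' $ i) / real CARD('n)) *\<^sub>R b i)"
    unfolding BTop_def by (simp add: sum_subtractf[symmetric] diff_divide_distrib scaleR_diff_left)
  also have "\<dots> = ((y $ j - y' $ j) / real CARD('n)) *\<^sub>R b j"
    by (subst sum.remove[of _ j]) (auto simp: assms intro!: sum.neutral)
  finally show ?thesis by (simp add: algebra_simps)
qed

lemma coupling_term_decomposition:
  fixes b :: "'n::finite \<Rightarrow> real^'d" and x1 x2 xk u :: "real^'d" and yk y1 v :: "real^'n" and t t' :: real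
  assumes coord: "\<And>i. i \<noteq> j \<Longrightarrow> yk $ i = y1 $ i" and t: "t \<noteq> 0"
  defines "xbar \<equiv> x1 + (t' / t) *\<^sub>R (x1 - x2)" and "N \<equiv> real CARD('n)"
  shows "t * (- inner (b j) xbar * (yk $ j - v $ j))
    = (t * inner (Bop b (xk - x1)) (yk - v)
        - t' * inner (Bop b (x1 - x2)) (y1 - v)
        - N * t' * inner (Bop b (x1 - x2)) (yk - y1)
        + t * inner (- Bop b xk) (yk - v)
        - (N - 1) * t * (inner (Bop b (x1 - u)) (yk - y1) + inner (Bop b u) (yk - y1)))
      + t * (inner (Bop b xbar) (y1 - v) - inner (b j) xbar * (y1 $ j - v $ j))"
proof -
  define p where "p w = inner (b j) w" for w
  define I where "I w = inner (Bop b w) (y1 - v)" for w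
  have p: "p (x - y) = p x - p y" "p (x + y) = p x + p y" "p (c *\<^sub>R x) = c * p x" for x y c
    by (simp_all add: p_def inner_diff_right inner_add_right)
  have I: "I (x - y) = I x - I y" "I (x + y) = I x + I y" "I (c *\<^sub>R x) = c * I x" for x y c
    by (simp_all add: I_def linear_diff[OF linear_Bop] linear_add[OF linear_Bop]
        linear_scale[OF linear_Bop] inner_diff_left inner_add_left)
  have moved: "inner (Bop b w) (yk - y1) = p w * (yk $ j - y1 $ j) / N" for w
    unfolding p_def N_def by (rule inner_Bop_single_coord[OF coord])
  have "yk - v = (yk - y1) + (y1 - v)"
    by simp
  then have full: "inner (Bop b w) (yk - v) = p w * (yk $ j - y1 $ j) / N + I w" for w
    by (simp only: inner_add_right moved I_def)
  have "N > 0"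
    by (simp add: N_def)
  with t show ?thesis
    unfolding inner_minus_left full moved xbar_def I_def[symmetric] p_def[symmetric] p I
    by (simp add: field_simps)
qed

lemma sum_PiE_insert:
  assumes "x \<notin> S"
  shows "(\<Sum>g\<in>PiE (insert x S) T. f g) = (\<Sum>g\<in>PiE S T. \<Sum>y\<in>T x. f (g(x := y)))"
proof -
  have "(\<Sum>g\<in>PiE (insert x S) T. f g) = (\<Sum>(y, g)\<in>T x \<times> PiE S T. f (g(x := y)))"
    unfolding PiE_insert_eq by (subst sum.reindex[OF inj_combinator[OF assms]]) (simp add: case_prod_unfold)
  also have "\<dots> = (\<Sum>g\<in>PiE S T. \<Sum>y\<in>T x. f (g(x := y)))"
    by (subst sum.cartesian_product[symmetric]) (rule sum.swap)
  finally show ?thesis .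
qed

lemma expect_upto_mono:
  assumes "\<And>js. F js \<le> G js"
  shows "expect_upto k F \<le> expect_upto k G"
  unfolding expect_upto_def
  by (rule ereal_divide_right_mono[OF sum_mono[OF assms]]) (simp add: card_PiE)

lemma expect_upto_add_mean_zero:
  assumes "(\<Sum>js\<in>PiE {2..k} (\<lambda>_. UNIV). D js) = 0"
  shows "expect_upto k (\<lambda>js. F js + ereal (D js)) = expect_upto k F"
  unfolding expect_upto_def using assms by (simp add: sum.distrib)

section \<open>The iterates of the algorithm\<close>

lemma stepsz_snd_Suc_Suc:
  "snd (stepsz n \<sigma> R (Suc (Suc k))) = snd (stepsz n \<sigma> R (Suc k)) + fst (stepsz n \<sigma> R (Suc (Suc k)))"
  by (cases k) (auto simp: Let_def split: prod.split)

lemma stepsz_pos: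
  assumes n: "n \<ge> 2" and R: "R > 0" and \<sigma>: "\<sigma> \<ge> 0"
  shows "0 < fst (stepsz n \<sigma> R (Suc k)) \<and> 0 < snd (stepsz n \<sigma> R (Suc k))"
proof (induction k)
  case 0
  then show ?case using n R by simp
next
  case (Suc k)
  show ?case
  proof (cases k)
    case 0
    then show ?thesis using n R by (simp add: add_pos_pos)
  next
    case (Suc k')
    obtain ak Ak where akA: "stepsz n \<sigma> R (Suc (Suc k')) = (ak, Ak)"
      by (cases "stepsz n \<sigma> R (Suc (Suc k'))")
    then have "0 < ak" "0 < Ak"
      using Suc.IH Suc by auto
    then have "0 < min ((1 + 1 / (n - 1)) * ak) (sqrt (n * (n + \<sigma> * Ak)) / (2 * R))"
      using n R \<sigma> by (auto intro!: mult_pos_pos add_pos_nonneg divide_pos_pos)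
    moreover from this \<open>0 < Ak\<close>
    have "0 < Ak + min ((1 + 1 / (n - 1)) * ak) (sqrt (n * (n + \<sigma> * Ak)) / (2 * R))"
      by linarith
    ultimately show ?thesis
      using Suc akA by (simp add: Let_def)
  qed
qed

lemma vrpda_cong:
  "(\<And>m. m \<le> k \<Longrightarrow> j m = j' m) \<Longrightarrow> vrpda b gs l \<sigma> R x0 y0 u v j k = vrpda b gs l \<sigma> R x0 y0 u v j' k"
proof (induction b gs l \<sigma> R x0 y0 u v j k rule: vrpda.induct)
  case (3 b gs l \<sigma> R x0 y0 u v j k)
  then show ?case by (simp add: Let_def)
qed (simp_all add: Let_def)

locale vrpda_problem =
  fixes b :: "'n::finite \<Rightarrow> real^'d" and gs :: "'n \<Rightarrow> real \<Rightarrow> ereal" and l :: "real^'d \<Rightarrow> ereal"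
    and \<sigma> R :: real and x0 u :: "real^'d" and y0 v :: "real^'n"
  assumes n2: "CARD('n) \<ge> 2" and R_pos: "R > 0"
    and g_proper: "\<And>i. proper_fun (gs i)"
    and g_lsc: "\<And>i. lsc_fun (gs i)"
    and g_convex: "\<And>i. convex_fun (gs i)"
    and l_proper: "proper_fun l"
    and l_lsc: "lsc_fun l"
    and sigma_nonneg: "\<sigma> \<ge> 0"
    and l_strong: "strongly_convex_fun \<sigma> l"
begin

abbreviation V :: "(nat \<Rightarrow> 'n) \<Rightarrow> nat \<Rightarrow> ('d, 'n) vstate" where
  "V j k \<equiv> vrpda b gs l \<sigma> R x0 y0 u v j k"

text \<open>In the paper's numbering this is \<open>x\<close>-bar\<open>\<^sub>k\<^sub>+\<^sub>1\<close>, used in iteration \<open>k + 2\<close>.\<close>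
abbreviation xbar :: "(nat \<Rightarrow> 'n) \<Rightarrow> nat \<Rightarrow> real^'d" where
  "xbar j k \<equiv> xs (V j (Suc k))
     + (fst (stepsz (real CARD('n)) \<sigma> R (Suc k)) / fst (stepsz (real CARD('n)) \<sigma> R (Suc (Suc k))))
       *\<^sub>R (xs (V j (Suc k)) - xs (V j k))"

lemma real_card_pos: "real CARD('n) > 0"
  using n2 by simp

lemma a_pos: "fst (stepsz (real CARD('n)) \<sigma> R (Suc k)) > 0"
  and A_pos: "snd (stepsz (real CARD('n)) \<sigma> R (Suc k)) > 0"
  using stepsz_pos[of "real CARD('n)" R \<sigma> k] n2 R_pos sigma_nonneg by auto

lemma g_not_MInfty: "gs i t \<noteq> -\<infinity>"
  using g_proper[of i] unfolding proper_fun_def by blast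

lemma l_not_MInfty: "l x \<noteq> -\<infinity>"
  using l_proper unfolding proper_fun_def by blast

lemma vrpda_Suc_0:
  "psis (V j (Suc 0)) = (\<lambda>y. ereal (real CARD('n)) * (ereal ((norm (y - y0))\<^sup>2 / 2)
      + ereal (1 / (2 * R)) * (ereal (inner (- Bop b x0) (y - v)) + gstar gs y)))"
  "ys (V j (Suc 0)) = argmin_of (psis (V j (Suc 0)))"
  "phis (V j (Suc 0)) = (\<lambda>x. ereal (real CARD('n)) * (ereal ((norm (x - x0))\<^sup>2 / 2)
      + ereal (1 / (2 * R)) * (ereal (inner (x - u) (zs (V j (Suc 0)))) + l x)))"
  "xs (V j (Suc 0)) = argmin_of (phis (V j (Suc 0)))"
  "zs (V j (Suc 0)) = BTop b (ys (V j (Suc 0)))"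
  using real_card_pos by (simp_all add: Let_def argmin_of_scale)

lemma vrpda_Suc_Suc:
  fixes j :: "nat \<Rightarrow> 'n" and k :: nat
  defines "jk \<equiv> j (Suc (Suc k))"
  shows "psis (V j (Suc (Suc k))) = (\<lambda>y. psis (V j (Suc k)) y + ereal (fst (stepsz (real CARD('n)) \<sigma> R (Suc (Suc k))))
            * (ereal (- inner (b jk) (xbar j k) * (y $ jk - v $ jk)) + gs jk (y $ jk)))"
    and "ys (V j (Suc (Suc k))) = argmin_of (psis (V j (Suc (Suc k))))"
    and "phis (V j (Suc (Suc k))) = (\<lambda>x. phis (V j (Suc k)) x + ereal (fst (stepsz (real CARD('n)) \<sigma> R (Suc (Suc k))))
            * (ereal (inner (x - u) (zs (V j (Suc k))
                 + (ys (V j (Suc (Suc k))) $ jk - ys (V j (Suc k)) $ jk) *\<^sub>R b jk)) + l x))"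
    and "xs (V j (Suc (Suc k))) = argmin_of (phis (V j (Suc (Suc k))))"
    and "zs (V j (Suc (Suc k))) = zs (V j (Suc k))
            + ((ys (V j (Suc (Suc k))) $ jk - ys (V j (Suc k)) $ jk) / real CARD('n)) *\<^sub>R b jk"
  unfolding jk_def by (simp_all add: Let_def)

declare vrpda.simps [simp del]

definition dual_coord :: "('n \<Rightarrow> real) \<Rightarrow> ('n \<Rightarrow> real) \<Rightarrow> ('n \<Rightarrow> real) \<Rightarrow> 'n \<Rightarrow> real \<Rightarrow> ereal" where
  "dual_coord c e \<alpha> i t = ereal (real CARD('n) / 2 * (t - y0 $ i)\<^sup>2 + c i * t + e i) + ereal (\<alpha> i) * gs i t"

definition dual_estimate :: "('n \<Rightarrow> real) \<Rightarrow> ('n \<Rightarrow> real) \<Rightarrow> ('n \<Rightarrow> real) \<Rightarrow> real^'n \<Rightarrow> ereal" where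
  "dual_estimate c e \<alpha> y = (\<Sum>i\<in>UNIV. dual_coord c e \<alpha> i (y $ i))"

definition primal_estimate :: "real^'d \<Rightarrow> real \<Rightarrow> real \<Rightarrow> real^'d \<Rightarrow> ereal" where
  "primal_estimate c e t x = ereal (real CARD('n) / 2 * (norm (x - x0))\<^sup>2 + inner c x + e) + ereal t * l x"

lemma dual_coord_argmin_of:
  assumes "\<alpha> i > 0"
  shows "quadratic_growth_minimizer (real CARD('n)) (dual_coord c e \<alpha> i) (argmin_of (dual_coord c e \<alpha> i))"
proof -
  obtain p where p: "gs i p \<noteq> \<infinity>"
    using g_proper[of i] unfolding proper_fun_def by blast
  have "dual_coord c e \<alpha> i
      = (\<lambda>t. ereal (real CARD('n) / 2 * (norm (t - y0 $ i))\<^sup>2 + inner (c i) t + e i) + ereal (\<alpha> i) * gs i t)"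
    by (simp add: dual_coord_def fun_eq_iff)
  moreover have "strongly_convex_fun (\<alpha> i * 0) (\<lambda>t. ereal (\<alpha> i) * gs i t)"
    using strongly_convex_fun_scale[OF convex_fun_imp_strongly_convex_fun_0[OF g_convex] g_not_MInfty assms] .
  moreover have "lsc_fun (\<lambda>t. ereal (\<alpha> i) * gs i t)"
    using lsc_fun_scale[OF g_lsc] assms by simp
  ultimately show ?thesis
    using quadratic_plus_argmin_of[of "real CARD('n)" "\<alpha> i * 0" "\<lambda>t. ereal (\<alpha> i) * gs i t" p]
      real_card_pos assms p g_not_MInfty[of i p] by (simp add: g_not_MInfty)
qed

lemma dual_estimate_minimizer:
  assumes "\<And>i. \<alpha> i > 0"
  shows "quadratic_growth_minimizer (real CARD('n)) (dual_estimate c e \<alpha>) (\<chi> i. argmin_of (dual_coord c e \<alpha> i))"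
  unfolding dual_estimate_def[abs_def]
  by (rule quadratic_growth_minimizer_separable) (rule dual_coord_argmin_of[OF assms])

lemma dual_estimate_argmin_of:
  assumes "\<And>i. \<alpha> i > 0"
  shows "argmin_of (dual_estimate c e \<alpha>) = (\<chi> i. argmin_of (dual_coord c e \<alpha> i))"
  using argmin_of_quadratic_growth_minimizer[OF dual_estimate_minimizer[OF assms] real_card_pos] .

lemma primal_estimate_argmin_of:
  assumes t: "t > 0"
  shows "quadratic_growth_minimizer (real CARD('n) + \<sigma> * t) (primal_estimate c e t) (argmin_of (primal_estimate c e t))"
proof -
  obtain p where p: "l p \<noteq> \<infinity>"
    using l_proper unfolding proper_fun_def by blast
  have "strongly_convex_fun (t * \<sigma>) (\<lambda>x. ereal t * l x)"
    by (rule strongly_convex_fun_scale[OF l_strong l_not_MInfty t])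
  moreover have "lsc_fun (\<lambda>x. ereal t * l x)"
    using lsc_fun_scale[OF l_lsc] t by simp
  ultimately show ?thesis
    using quadratic_plus_argmin_of[of "real CARD('n)" "t * \<sigma>" "\<lambda>x. ereal t * l x" p]
      real_card_pos sigma_nonneg t p l_not_MInfty[of p]
    by (simp add: l_not_MInfty primal_estimate_def[abs_def] mult.commute)
qed

lemma dual_estimate_update:
  assumes "\<alpha> j > 0" and "t > 0"
  shows "dual_estimate c e \<alpha> y + ereal t * (ereal (- \<beta> * (y $ j - v $ j)) + gs j (y $ j))
    = dual_estimate (c(j := c j - t * \<beta>)) (e(j := e j + t * \<beta> * v $ j)) (\<alpha>(j := \<alpha> j + t)) y"
proof -
  let ?c = "c(j := c j - t * \<beta>)" and ?e = "e(j := e j + t * \<beta> * v $ j)" and ?\<alpha> = "\<alpha>(j := \<alpha> j + t)"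
  have "dual_coord ?c ?e ?\<alpha> j (y $ j)
      = dual_coord c e \<alpha> j (y $ j) + ereal t * (ereal (- \<beta> * (y $ j - v $ j)) + gs j (y $ j))"
    using assms by (cases "gs j (y $ j)") (simp_all add: dual_coord_def algebra_simps)
  moreover have "dual_coord ?c ?e ?\<alpha> i = dual_coord c e \<alpha> i" if "i \<noteq> j" for i
    using that by (simp add: dual_coord_def fun_eq_iff)
  ultimately show ?thesis
    unfolding dual_estimate_def sum.remove[OF finite UNIV_I, of _ j] by (simp add: ac_simps)
qed

lemma primal_estimate_update:
  assumes "t > 0" and "s > 0"
  shows "primal_estimate c e t x + ereal s * (ereal (inner (x - u) w) + l x)
    = primal_estimate (c + s *\<^sub>R w) (e - s * inner u w) (t + s) x"
  using assms by (cases "l x") (simp_all add: primal_estimate_def inner_diff_left inner_add_left inner_commute algebra_simps)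

lemma dual_estimate_initial:
  defines "t \<equiv> 1 / (2 * R)"
  shows "ereal (real CARD('n)) * (ereal ((norm (y - y0))\<^sup>2 / 2) + ereal t * (ereal (inner (- Bop b x0) (y - v)) + gstar gs y))
    = dual_estimate (\<lambda>i. - t * inner (b i) x0) (\<lambda>i. t * inner (b i) x0 * v $ i) (\<lambda>i. t) y"
proof -
  let ?n = "real CARD('n)" and ?G = "\<Sum>i\<in>UNIV. gs i (y $ i)"
  have t: "t > 0"
    using R_pos by (simp add: t_def)
  have "\<bar>?G\<bar> = \<infinity> \<Longrightarrow> ?G = \<infinity>"
    using g_not_MInfty by (auto simp: sum_Inf sum_Pinfty)
  then have "ereal ?n * (ereal ((norm (y - y0))\<^sup>2 / 2) + ereal t * (ereal (inner (- Bop b x0) (y - v)) + gstar gs y))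
      = ereal (?n * (norm (y - y0))\<^sup>2 / 2 + ?n * t * inner (- Bop b x0) (y - v)) + ereal t * ?G"
    using real_card_pos t by (cases ?G) (simp_all add: gstar_def algebra_simps)
  also have "?n * (norm (y - y0))\<^sup>2 / 2 = (\<Sum>i\<in>UNIV. ?n / 2 * (y $ i - y0 $ i)\<^sup>2)"
    by (simp add: norm_vec_power2 sum_distrib_left sum_divide_distrib)
  also have "?n * t * inner (- Bop b x0) (y - v) = - t * (\<Sum>i\<in>UNIV. inner (b i) x0 * (y $ i - v $ i))"
    using real_card_pos by (simp add: inner_Bop)
  also have "\<dots> = (\<Sum>i\<in>UNIV. - t * inner (b i) x0 * y $ i + t * inner (b i) x0 * v $ i)"
    by (simp add: sum_distrib_left algebra_simps)
  also have "ereal t * ?G = (\<Sum>i\<in>UNIV. ereal t * gs i (y $ i))"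
    using sum_distrib_right_ereal[of t "\<lambda>i. gs i (y $ i)" UNIV] t by (simp add: mult.commute)
  finally show ?thesis
    by (simp add: dual_estimate_def dual_coord_def sum.distrib sum_subtractf algebra_simps)
qed

lemma primal_estimate_initial:
  defines "t \<equiv> real CARD('n) / (2 * R)"
  shows "ereal (real CARD('n)) * (ereal ((norm (x - x0))\<^sup>2 / 2) + ereal (1 / (2 * R)) * (ereal (inner (x - u) z) + l x))
    = primal_estimate (t *\<^sub>R z) (- t * inner u z) t x"
  using real_card_pos R_pos
  by (cases "l x") (simp_all add: t_def primal_estimate_def inner_diff_left inner_diff_right inner_commute field_simps)

lemma psis_vrpda_Suc_Suc_dual_estimate:
  fixes j :: "nat \<Rightarrow> 'n" and k :: nat
  assumes \<alpha>: "\<And>i. \<alpha> i > 0" and psi: "psis (V j (Suc k)) = dual_estimate c e \<alpha>"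
  defines "jk \<equiv> j (Suc (Suc k))" and "t \<equiv> fst (stepsz (real CARD('n)) \<sigma> R (Suc (Suc k)))"
    and "\<beta> \<equiv> inner (b (j (Suc (Suc k)))) (xbar j k)"
  shows "psis (V j (Suc (Suc k)))
    = dual_estimate (c(jk := c jk - t * \<beta>)) (e(jk := e jk + t * \<beta> * v $ jk)) (\<alpha>(jk := \<alpha> jk + t))"
  unfolding vrpda_Suc_Suc(1) psi jk_def t_def \<beta>_def
  by (rule ext, rule dual_estimate_update) (use \<alpha> a_pos in auto)

lemma psis_dual_estimate:
  "\<exists>c e \<alpha>. psis (V j (Suc k)) = dual_estimate c e \<alpha> \<and> (\<forall>i. \<alpha> i > 0)"
proof (induction k)
  case 0
  show ?case
    unfolding vrpda_Suc_0(1) dual_estimate_initial by (intro exI conjI refl) (use R_pos in auto)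
next
  case (Suc k)
  then obtain c e \<alpha> where \<alpha>: "\<And>i. \<alpha> i > 0" and psi: "psis (V j (Suc k)) = dual_estimate c e \<alpha>"
    by blast
  let ?jk = "j (Suc (Suc k))" and ?t = "fst (stepsz (real CARD('n)) \<sigma> R (Suc (Suc k)))"
  have "\<forall>i. (\<alpha>(?jk := \<alpha> ?jk + ?t)) i > 0"
    using \<alpha> a_pos by (simp add: add_pos_pos)
  with psis_vrpda_Suc_Suc_dual_estimate[OF \<alpha> psi] show ?case
    by blast
qed

lemma phis_primal_estimate:
  "\<exists>c e. phis (V j (Suc k)) = primal_estimate c e (snd (stepsz (real CARD('n)) \<sigma> R (Suc k)))"
proof (induction k)
  case 0
  show ?case
    unfolding vrpda_Suc_0(3) primal_estimate_initial by auto
next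
  case (Suc k)
  then obtain c e where "phis (V j (Suc k)) = primal_estimate c e (snd (stepsz (real CARD('n)) \<sigma> R (Suc k)))"
    by blast
  then show ?case
    unfolding vrpda_Suc_Suc(3) stepsz_snd_Suc_Suc \<open>phis (V j (Suc k)) = _\<close>
    by (intro exI ext) (rule primal_estimate_update[OF A_pos a_pos])
qed

lemma vrpda_argmin_of:
  "ys (V j (Suc k)) = argmin_of (psis (V j (Suc k)))"
  "xs (V j (Suc k)) = argmin_of (phis (V j (Suc k)))"
  by (cases k; simp add: vrpda_Suc_0 vrpda_Suc_Suc)+

lemma psis_quadratic_growth:
  "quadratic_growth_minimizer (real CARD('n)) (psis (V j (Suc k))) (ys (V j (Suc k)))"
  using psis_dual_estimate[of j k] dual_estimate_minimizer dual_estimate_argmin_of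
  by (metis vrpda_argmin_of(1))

lemma phis_quadratic_growth:
  "quadratic_growth_minimizer (real CARD('n) + \<sigma> * snd (stepsz (real CARD('n)) \<sigma> R (Suc k)))
     (phis (V j (Suc k))) (xs (V j (Suc k)))"
  using phis_primal_estimate[of j k] primal_estimate_argmin_of[OF A_pos]
  by (metis vrpda_argmin_of(2))

text \<open>The dual estimate is separable and the update changes only its \<open>j\<^sub>k\<close>-th summand.\<close>
lemma ys_vrpda_Suc_Suc_unsampled:
  assumes "i \<noteq> j (Suc (Suc k))"
  shows "ys (V j (Suc (Suc k))) $ i = ys (V j (Suc k)) $ i"
proof -
  let ?jk = "j (Suc (Suc k))" and ?t = "fst (stepsz (real CARD('n)) \<sigma> R (Suc (Suc k)))"
    and ?\<beta> = "inner (b (j (Suc (Suc k)))) (xbar j k)"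
  obtain c e \<alpha> where \<alpha>: "\<And>i. \<alpha> i > 0" and psi: "psis (V j (Suc k)) = dual_estimate c e \<alpha>"
    using psis_dual_estimate by blast
  let ?c = "c(?jk := c ?jk - ?t * ?\<beta>)" and ?e = "e(?jk := e ?jk + ?t * ?\<beta> * v $ ?jk)"
    and ?\<alpha> = "\<alpha>(?jk := \<alpha> ?jk + ?t)"
  have \<alpha>': "\<And>i. ?\<alpha> i > 0"
    using \<alpha> a_pos by (simp add: add_pos_pos)
  have "psis (V j (Suc (Suc k))) = dual_estimate ?c ?e ?\<alpha>"
    by (rule psis_vrpda_Suc_Suc_dual_estimate[OF \<alpha> psi])
  then have "ys (V j (Suc (Suc k))) = (\<chi> i. argmin_of (dual_coord ?c ?e ?\<alpha> i))"
    using dual_estimate_argmin_of[of ?\<alpha>, OF \<alpha>'] by (simp add: vrpda_Suc_Suc(2))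
  moreover have "ys (V j (Suc k)) = (\<chi> i. argmin_of (dual_coord c e \<alpha> i))"
    using dual_estimate_argmin_of[OF \<alpha>] psi by (simp add: vrpda_argmin_of(1))
  moreover have "dual_coord ?c ?e ?\<alpha> i = dual_coord c e \<alpha> i"
    using assms by (simp add: dual_coord_def fun_eq_iff)
  ultimately show ?thesis
    by simp
qed

lemma zs_vrpda_Suc: "zs (V j (Suc k)) = BTop b (ys (V j (Suc k)))"
proof (induction k)
  case 0
  show ?case by (rule vrpda_Suc_0(5))
next
  case (Suc k)
  have "BTop b (ys (V j (Suc (Suc k)))) = BTop b (ys (V j (Suc k)))
      + ((ys (V j (Suc (Suc k))) $ j (Suc (Suc k)) - ys (V j (Suc k)) $ j (Suc (Suc k))) / real CARD('n)) *\<^sub>R b (j (Suc (Suc k)))"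
    by (rule BTop_single_coord) (rule ys_vrpda_Suc_Suc_unsampled)
  then show ?case
    unfolding vrpda_Suc_Suc(5) Suc.IH by simp
qed

text \<open>The error of estimating the coupling \<open>\<langle>B x, y\<^sub>k\<^sub>-\<^sub>1 - v\<rangle>\<close> at \<open>x\<close>-bar by \<open>n\<close> times its
  sampled summand; it has mean zero over \<open>j\<^sub>k\<close>.\<close>
definition sampling_error :: "(nat \<Rightarrow> 'n) \<Rightarrow> nat \<Rightarrow> real" where
  "sampling_error j k = fst (stepsz (real CARD('n)) \<sigma> R (Suc (Suc k)))
     * (inner (Bop b (xbar j k)) (ys (V j (Suc k)) - v)
        - inner (b (j (Suc (Suc k)))) (xbar j k) * (ys (V j (Suc k)) $ j (Suc (Suc k)) - v $ j (Suc (Suc k))))"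

lemma sum_sampling_error_fun_upd:
  "(\<Sum>i\<in>UNIV. sampling_error (j(Suc (Suc k) := i)) k) = 0"
proof -
  have "V (j(Suc (Suc k) := i)) m = V j m" if "m \<le> Suc k" for i m
    using that by (intro vrpda_cong) auto
  then have "sampling_error (j(Suc (Suc k) := i)) k = fst (stepsz (real CARD('n)) \<sigma> R (Suc (Suc k)))
     * (inner (Bop b (xbar j k)) (ys (V j (Suc k)) - v) - inner (b i) (xbar j k) * (ys (V j (Suc k)) - v) $ i)" for i
    by (simp add: sampling_error_def)
  then show ?thesis
    by (simp add: inner_Bop sum_subtractf flip: sum_distrib_left)
qed

lemma sum_sampling_error:
  "(\<Sum>js\<in>PiE {2..Suc (Suc k)} (\<lambda>_. UNIV). sampling_error js k) = 0"
proof -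
  have "{2..Suc (Suc k)} = insert (Suc (Suc k)) {2..Suc k}"
    by auto
  then show ?thesis
    by (simp add: sum_PiE_insert sum_sampling_error_fun_upd)
qed

lemma psis_vrpda_lower_bound:
  fixes j :: "nat \<Rightarrow> 'n" and k :: nat
  defines "N \<equiv> real CARD('n)" and "S2 \<equiv> V j k" and "S1 \<equiv> V j (Suc k)" and "Sk \<equiv> V j (Suc (Suc k))"
    and "t \<equiv> fst (stepsz (real CARD('n)) \<sigma> R (Suc (Suc k)))" and "t' \<equiv> fst (stepsz (real CARD('n)) \<sigma> R (Suc k))"
    and "jk \<equiv> j (Suc (Suc k))"
  shows "psis S1 (ys S1) + ereal (N / 2 * (norm (ys Sk - ys S1))\<^sup>2)
           + ereal t * gs jk (ys Sk $ jk)
           + ereal (t * inner (Bop b (xs Sk - xs S1)) (ys Sk - v)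
                    - t' * inner (Bop b (xs S1 - xs S2)) (ys S1 - v)
                    - N * t' * inner (Bop b (xs S1 - xs S2)) (ys Sk - ys S1)
                    + t * inner (- Bop b (xs Sk)) (ys Sk - v)
                    - (N - 1) * t * (inner (Bop b (xs S1 - u)) (ys Sk - ys S1)
                                      + inner (Bop b u) (ys Sk - ys S1)))
           + ereal (sampling_error j k)
         \<le> psis Sk (ys Sk)"
    (is "?P + ereal ?Lin + ereal ?D \<le> _")
proof -
  let ?r = "- inner (b jk) (xbar j k) * (ys Sk $ jk - v $ jk)" and ?g = "gs jk (ys Sk $ jk)"
  note growth = psis_quadratic_growth[of j k, folded S1_def N_def, unfolded quadratic_growth_minimizer_def]
  obtain P where P: "psis S1 (ys S1) = ereal P"
    using growth by (cases "psis S1 (ys S1)") auto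
  have grow: "ereal (P + N / 2 * (norm (ys Sk - ys S1))\<^sup>2) \<le> psis S1 (ys Sk)"
    using growth P by simp
  have moved: "\<And>i. i \<noteq> jk \<Longrightarrow> ys Sk $ i = ys S1 $ i"
    unfolding Sk_def S1_def jk_def by (rule ys_vrpda_Suc_Suc_unsampled)
  have "t \<noteq> 0"
    using a_pos[of "Suc k"] by (simp add: t_def)
  have coupling: "t * ?r = ?Lin + ?D"
    using moved \<open>t \<noteq> 0\<close> unfolding sampling_error_def S1_def S2_def Sk_def t_def t'_def N_def jk_def
    by (rule coupling_term_decomposition)
  obtain G where G: "ereal t * ?g = G"
    by blast
  have "?P + ereal ?Lin + ereal ?D
      = ereal (P + N / 2 * (norm (ys Sk - ys S1))\<^sup>2) + ereal (t * ?r) + ereal t * ?g"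
    unfolding P coupling G by (cases G) simp_all
  also have "\<dots> \<le> psis S1 (ys Sk) + ereal (t * ?r) + ereal t * ?g"
    using grow by (intro add_right_mono)
  also have "\<dots> = psis Sk (ys Sk)"
    unfolding Sk_def S1_def t_def N_def jk_def vrpda_Suc_Suc(1)
    by (simp add: ereal_distrib_left add.assoc)
  finally show ?thesis .
qed

lemma phis_vrpda_lower_bound:
  fixes j :: "nat \<Rightarrow> 'n" and k :: nat
  defines "N \<equiv> real CARD('n)" and "S1 \<equiv> V j (Suc k)" and "Sk \<equiv> V j (Suc (Suc k))"
    and "t \<equiv> fst (stepsz (real CARD('n)) \<sigma> R (Suc (Suc k)))" and "A1 \<equiv> snd (stepsz (real CARD('n)) \<sigma> R (Suc k))"
  shows "phis S1 (xs S1) + ereal ((N + \<sigma> * A1) / 2 * (norm (xs Sk - xs S1))\<^sup>2)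
           + ereal t * (ereal (inner (xs Sk - u) (BTop b (ys Sk))
                                + (N - 1) * inner (xs Sk - u) (BTop b (ys Sk - ys S1)))
                         + l (xs Sk))
         \<le> phis Sk (xs Sk)"
proof -
  let ?jk = "j (Suc (Suc k))"
  let ?d = "ys Sk $ ?jk - ys S1 $ ?jk"
  have moved: "BTop b (ys Sk) = BTop b (ys S1) + (?d / N) *\<^sub>R b ?jk"
    unfolding Sk_def S1_def N_def by (rule BTop_single_coord) (rule ys_vrpda_Suc_Suc_unsampled[where j = j and k = k])
  have "zs S1 + ?d *\<^sub>R b ?jk = BTop b (ys Sk) + (N - 1) *\<^sub>R BTop b (ys Sk - ys S1)"
    using real_card_pos unfolding linear_diff[OF linear_BTop] moved zs_vrpda_Suc S1_def N_def
    by (simp add: scaleR_add_left[symmetric] field_simps)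
  then have "phis Sk (xs Sk) = phis S1 (xs Sk) + ereal t * (ereal (inner (xs Sk - u) (BTop b (ys Sk))
      + (N - 1) * inner (xs Sk - u) (BTop b (ys Sk - ys S1))) + l (xs Sk))"
    unfolding Sk_def S1_def t_def N_def vrpda_Suc_Suc(3) by (simp add: inner_add_right)
  moreover have "phis S1 (xs S1) + ereal ((N + \<sigma> * A1) / 2 * (norm (xs Sk - xs S1))\<^sup>2) \<le> phis S1 (xs Sk)"
    using phis_quadratic_growth[where j = j and k = k, folded S1_def A1_def N_def]
    unfolding quadratic_growth_minimizer_def by blast
  ultimately show ?thesis
    by (simp add: add_right_mono)
qed

end

theorem lemma5:
  fixes b :: "'n::finite \<Rightarrow> real^'d"
    and gs :: "'n \<Rightarrow> real \<Rightarrow> ereal"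
    and l :: "real^'d \<Rightarrow> ereal"
    and \<sigma> R :: real
    and x0 u :: "real^'d" and y0 v :: "real^'n"
    and k :: nat
  assumes n2: "CARD('n) \<ge> 2"
    and R_pos: "R > 0"
    and b_bound: "\<And>i. norm (b i) \<le> R"
    and g_proper: "\<And>i. proper_fun (gs i)"
    and g_lsc: "\<And>i. lsc_fun (gs i)"
    and g_convex: "\<And>i. convex_fun (gs i)"
    and l_proper: "proper_fun l"
    and l_lsc: "lsc_fun l"
    and sigma_nonneg: "\<sigma> \<ge> 0"
    and l_strong: "strongly_convex_fun \<sigma> l"
    and x0_dom: "l x0 \<noteq> \<infinity>" and y0_dom: "gstar gs y0 \<noteq> \<infinity>"
    and u_dom: "l u \<noteq> \<infinity>" and v_dom: "gstar gs v \<noteq> \<infinity>"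
    and k2: "k \<ge> 2"
  shows
   "expect_upto k (\<lambda>js. psis (vrpda b gs l \<sigma> R x0 y0 u v js k) (ys (vrpda b gs l \<sigma> R x0 y0 u v js k)))
    \<ge> expect_upto k (\<lambda>js.
        let n = real CARD('n);
            Sk = vrpda b gs l \<sigma> R x0 y0 u v js k;
            S1 = vrpda b gs l \<sigma> R x0 y0 u v js (k - 1);
            S2 = vrpda b gs l \<sigma> R x0 y0 u v js (k - 2);
            ak = fst (stepsz n \<sigma> R k);
            ak1 = fst (stepsz n \<sigma> R (k - 1));
            jk = js k
        in psis S1 (ys S1) + ereal (n / 2 * (norm (ys Sk - ys S1))\<^sup>2)
           + ereal ak * gs jk (ys Sk $ jk)
           + ereal (ak * inner (Bop b (xs Sk - xs S1)) (ys Sk - v)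
                    - ak1 * inner (Bop b (xs S1 - xs S2)) (ys S1 - v)
                    - n * ak1 * inner (Bop b (xs S1 - xs S2)) (ys Sk - ys S1)
                    + ak * inner (- Bop b (xs Sk)) (ys Sk - v)
                    - (n - 1) * ak * (inner (Bop b (xs S1 - u)) (ys Sk - ys S1)
                                      + inner (Bop b u) (ys Sk - ys S1))))
   \<and> expect_upto k (\<lambda>js. phis (vrpda b gs l \<sigma> R x0 y0 u v js k) (xs (vrpda b gs l \<sigma> R x0 y0 u v js k)))
    \<ge> expect_upto k (\<lambda>js.
        let n = real CARD('n);
            Sk = vrpda b gs l \<sigma> R x0 y0 u v js k;
            S1 = vrpda b gs l \<sigma> R x0 y0 u v js (k - 1);
            ak = fst (stepsz n \<sigma> R k);
            Ak1 = snd (stepsz n \<sigma> R (k - 1))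
        in phis S1 (xs S1) + ereal ((n + \<sigma> * Ak1) / 2 * (norm (xs Sk - xs S1))\<^sup>2)
           + ereal ak * (ereal (inner (xs Sk - u) (BTop b (ys Sk))
                                + (n - 1) * inner (xs Sk - u) (BTop b (ys Sk - ys S1)))
                         + l (xs Sk)))"
proof -
  interpret vrpda_problem b gs l \<sigma> R x0 u y0 v
    using n2 R_pos g_proper g_lsc g_convex l_proper l_lsc sigma_nonneg l_strong by unfold_locales
  obtain k' where k: "k = Suc (Suc k')"
    using k2 by (metis add_2_eq_Suc le_Suc_ex)
  have pred: "k - 1 = Suc k'" "k - 2 = k'"
    using k by simp_all
  show ?thesis
    unfolding Let_def pred unfolding k
    by (intro conjI order.trans[OF eq_refl expect_upto_mono[OF psis_vrpda_lower_bound]]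
        expect_upto_mono[OF phis_vrpda_lower_bound])
      (rule expect_upto_add_mean_zero[OF sum_sampling_error, symmetric])
qed

end
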